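(* Consider the setting described in the context, with $\beta>0$, budget $C>1$, and $\xi\in(0,C-1]$. Let $\mathcal{L}_\beta^{\lambda}:=\max_{\pi\in\Pi}\mathcal{L}_\beta(\pi,\lambda)$ and let $\lambda^\ast\in\arg\min_{\lambda\ge0}\mathcal{L}_\beta^{\lambda}$ be an optimal dual variable. Then $$0\le\lambda^\ast\le\frac{\mathcal{L}_\beta^{\lambda^\ast}-\mathbb{P}_{(z,l)\sim\underline{\rho}}(\Phi_0(z)=l)}{\xi},$$ and hence the set $\Lambda^\ast$ of all optimal dual variables is bounded.
   Context: Let $\mathcal{Z}$ be a set of inputs and labels $l\in\{0,1\}$. Two judge functions $\Phi_0,\Phi_1:\mathcal{Z}\to\{0,1\}$ are given. The reward is $r(z,a,l)=\mathbb{I}(\Phi_a(z)=l)$ and the cost is $c:\mathcal{Z}\times\{0,1\}\to[0,\infty)$ with $c(z,0)=1$ for all $z$. Let $\rho,\underline{\rho},\overline{\rho}$ be fixed distributions on $\mathcal{Z}\times\{0,1\}$. A policy $\pi$ assigns to each $z$ a distribution $\pi(\cdot\mid z)$ on $\{0,1\}$; $\Pi$ is a class of policies containing the policy $\pi_0$ with $\pi_0(0\mid z)=1$ for all $z$. Entropy: $\mathcal{H}(\pi):=\mathbb{E}_{(z,l)\sim\rho}\big[-\sum_{a}\pi(a\mid z)\log\pi(a\mid z)\big]$. Regularized Lagrangian: $$\mathcal{L}_\beta(\pi,\lambda)=\mathbb{E}_{(z,l)\sim\underline{\rho},a\sim\pi(\cdot\mid z)}[r(z,a,l)]-\lambda\Big(\mathbb{E}_{(z,l)\sim\overline{\rho},a\sim\pi(\cdot\mid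 z)}[c(z,a)]-C\Big)+\beta\Big(\mathcal{H}(\pi)+\tfrac12\lambda^2\Big).$$ *)

theory Defs
  imports "HOL-Probability.Probability"
begin

(* Labels and actions in {0,1} are encoded as bool (False = 0, True = 1).
   A policy is pi :: 'z => bool => real, pi z a = pi(a|z). *)

definition is_policy :: "('z \<Rightarrow> bool \<Rightarrow> real) \<Rightarrow> bool" where
  "is_policy \<pi> \<longleftrightarrow> (\<forall>z a. 0 \<le> \<pi> z a) \<and> (\<forall>z. \<pi> z False + \<pi> z True = 1)"

definition pi0 :: "'z \<Rightarrow> bool \<Rightarrow> real" where
  "pi0 z a = (if a then 0 else 1)"

definition reward :: "(bool \<Rightarrow> 'z \<Rightarrow> bool) \<Rightarrow> 'z \<Rightarrow> bool \<Rightarrow> bool \<Rightarrow> real" where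
  "reward \<Phi> z a l = (if \<Phi> a z = l then 1 else 0)"

(* entropy H(pi) = E_{(z,l)~rho}[ - sum_a pi(a|z) log pi(a|z) ]  (ln 0 = 0 in Isabelle, so 0 log 0 = 0) *)
definition entropy :: "('z \<times> bool) measure \<Rightarrow> ('z \<Rightarrow> bool \<Rightarrow> real) \<Rightarrow> real" where
  "entropy \<rho> \<pi> = (\<integral>x. - (\<Sum>a\<in>UNIV. \<pi> (fst x) a * ln (\<pi> (fst x) a)) \<partial>\<rho>)"

definition lagrangian ::
  "('z \<times> bool) measure \<Rightarrow> ('z \<times> bool) measure \<Rightarrow> ('z \<times> bool) measure \<Rightarrow>
   (bool \<Rightarrow> 'z \<Rightarrow> bool) \<Rightarrow> ('z \<Rightarrow> bool \<Rightarrow> real) \<Rightarrow> real \<Rightarrow> real \<Rightarrow>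
   ('z \<Rightarrow> bool \<Rightarrow> real) \<Rightarrow> real \<Rightarrow> real" where
  "lagrangian \<rho> \<rho>l \<rho>u \<Phi> c C \<beta> \<pi> lam =
     (\<integral>x. (\<Sum>a\<in>UNIV. \<pi> (fst x) a * reward \<Phi> (fst x) a (snd x)) \<partial>\<rho>l)
     - lam * ((\<integral>x. (\<Sum>a\<in>UNIV. \<pi> (fst x) a * c (fst x) a) \<partial>\<rho>u) - C)
     + \<beta> * (entropy \<rho> \<pi> + 1/2 * lam\<^sup>2)"

definition dual_fun ::
  "('z \<times> bool) measure \<Rightarrow> ('z \<times> bool) measure \<Rightarrow> ('z \<times> bool) measure \<Rightarrow>
   (bool \<Rightarrow> 'z \<Rightarrow> bool) \<Rightarrow> ('z \<Rightarrow> bool \<Rightarrow> real) \<Rightarrow> real \<Rightarrow> real \<Rightarrow>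
   ('z \<Rightarrow> bool \<Rightarrow> real) set \<Rightarrow> real \<Rightarrow> real" where
  "dual_fun \<rho> \<rho>l \<rho>u \<Phi> c C \<beta> Pol lam = (SUP \<pi>\<in>Pol. lagrangian \<rho> \<rho>l \<rho>u \<Phi> c C \<beta> \<pi> lam)"

definition optimal_duals ::
  "('z \<times> bool) measure \<Rightarrow> ('z \<times> bool) measure \<Rightarrow> ('z \<times> bool) measure \<Rightarrow>
   (bool \<Rightarrow> 'z \<Rightarrow> bool) \<Rightarrow> ('z \<Rightarrow> bool \<Rightarrow> real) \<Rightarrow> real \<Rightarrow> real \<Rightarrow>
   ('z \<Rightarrow> bool \<Rightarrow> real) set \<Rightarrow> real set" where
  "optimal_duals \<rho> \<rho>l \<rho>u \<Phi> c C \<beta> Pol =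
     {lam. 0 \<le> lam \<and> (\<forall>\<mu>\<ge>0. dual_fun \<rho> \<rho>l \<rho>u \<Phi> c C \<beta> Pol lam \<le> dual_fun \<rho> \<rho>l \<rho>u \<Phi> c C \<beta> Pol \<mu>)}"

end

theory Submission
  imports Defs
begin

(* The default policy pi0 has zero entropy, unit cost and accuracy P := P(Phi_0(z) = l), so
   L_beta(pi0, lambda) = P + lambda (C - 1) + beta lambda^2 / 2.  Since every Lagrangian is
   bounded above uniformly in pi, the dual function dominates this value, and with
   xi <= C - 1 this gives lambda xi <= L_beta^lambda - P for every lambda >= 0.  All optimal
   dual variables share the same dual value, so they lie in one bounded interval. *)

lemma (in prob_space) integral_le_nonneg_const:
  fixes f :: "_ \<Rightarrow> real"
  assumes "0 \<le> c" and "\<And>x. f x \<le> c"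
  shows "(\<integral>x. f x \<partial>M) \<le> c"
  \<comment> \<open>No integrability is needed: a non-integrable function has integral 0.\<close>
  using assms integral_le_const[of f c] not_integrable_integral_eq[of M f]
  by (cases "integrable M f") auto

lemma neg_mult_ln_le_one_minus:
  fixes p :: real
  assumes "0 \<le> p"
  shows "- (p * ln p) \<le> 1 - p"
proof (cases "p = 0")
  case False
  with assms have "0 < p" by simp
  then have "ln (1 / p) \<le> 1 / p - 1"
    by (intro ln_le_minus_one) simp
  then have "p * ln (1 / p) \<le> p * (1 / p - 1)"
    using \<open>0 < p\<close> by (intro mult_left_mono) auto
  then show ?thesis
    using \<open>0 < p\<close> by (simp add: ln_div algebra_simps)
qed simp

lemma is_policyD:
  assumes "is_policy \<pi>"
  shows "0 \<le> \<pi> z a" and "\<pi> z False + \<pi> z True = 1"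
  using assms unfolding is_policy_def by auto

lemma expected_reward_le_one:
  assumes "prob_space M" and "is_policy \<pi>"
  shows "(\<integral>x. (\<Sum>a\<in>UNIV. \<pi> (fst x) a * reward \<Phi> (fst x) a (snd x)) \<partial>M) \<le> 1"
proof (rule prob_space.integral_le_nonneg_const[OF assms(1)])
  fix x
  have le: "\<pi> (fst x) a * reward \<Phi> (fst x) a (snd x) \<le> \<pi> (fst x) a" for a
    using is_policyD(1)[OF assms(2)] by (simp add: reward_def)
  show "(\<Sum>a\<in>UNIV. \<pi> (fst x) a * reward \<Phi> (fst x) a (snd x)) \<le> 1"
    using le[of False] le[of True] is_policyD(2)[OF assms(2), of "fst x"]
    by (simp add: UNIV_bool)
qed simp

lemma entropy_le_one:
  assumes "prob_space \<rho>" and "is_policy \<pi>"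
  shows "entropy \<rho> \<pi> \<le> 1"
  unfolding entropy_def
proof (rule prob_space.integral_le_nonneg_const[OF assms(1)])
  fix x
  have le: "- (\<pi> (fst x) a * ln (\<pi> (fst x) a)) \<le> 1 - \<pi> (fst x) a" for a
    using is_policyD(1)[OF assms(2)] by (rule neg_mult_ln_le_one_minus)
  show "- (\<Sum>a\<in>UNIV. \<pi> (fst x) a * ln (\<pi> (fst x) a)) \<le> 1"
    using le[of False] le[of True] is_policyD(2)[OF assms(2), of "fst x"]
    by (simp add: UNIV_bool)
qed simp

lemma expected_cost_nonneg:
  assumes "\<forall>z a. 0 \<le> c z a" and "is_policy \<pi>"
  shows "0 \<le> (\<integral>x. (\<Sum>a\<in>UNIV. \<pi> (fst x) a * c (fst x) a) \<partial>M)"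
  using assms is_policyD(1)[OF assms(2)]
  by (intro integral_nonneg_AE AE_I2 sum_nonneg mult_nonneg_nonneg) auto

lemma lagrangian_le:
  assumes "prob_space \<rho>" and "prob_space \<rho>l" and "\<forall>z a. 0 \<le> c z a"
    and "is_policy \<pi>" and "0 \<le> lam" and "0 \<le> \<beta>"
  shows "lagrangian \<rho> \<rho>l \<rho>u \<Phi> c C \<beta> \<pi> lam \<le> 1 + lam * C + \<beta> * (1 + 1/2 * lam\<^sup>2)"
proof -
  have "- lam * ((\<integral>x. (\<Sum>a\<in>UNIV. \<pi> (fst x) a * c (fst x) a) \<partial>\<rho>u) - C) \<le> lam * C"
    using expected_cost_nonneg[OF assms(3,4), of \<rho>u] assms(5) by (simp add: algebra_simps)
  moreover have "\<beta> * (entropy \<rho> \<pi> + 1/2 * lam\<^sup>2) \<le> \<beta> * (1 + 1/2 * lam\<^sup>2)"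
    using entropy_le_one[OF assms(1,4)] assms(6) by (simp add: mult_left_mono)
  ultimately show ?thesis
    using expected_reward_le_one[OF assms(2,4), of \<Phi>] unfolding lagrangian_def by linarith
qed

lemma lagrangian_pi0:
  assumes "prob_space \<rho>u" and "\<forall>z. c z False = 1"
    and "{x \<in> space \<rho>l. \<Phi> False (fst x) = snd x} \<in> sets \<rho>l"
  shows "lagrangian \<rho> \<rho>l \<rho>u \<Phi> c C \<beta> pi0 lam =
     measure \<rho>l {x \<in> space \<rho>l. \<Phi> False (fst x) = snd x} + lam * (C - 1) + \<beta> / 2 * lam\<^sup>2"
proof -
  let ?A = "{x \<in> space \<rho>l. \<Phi> False (fst x) = snd x}"
  have "(\<integral>x. (\<Sum>a\<in>UNIV. pi0 (fst x) a * reward \<Phi> (fst x) a (snd x)) \<partial>\<rho>l)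
        = (\<integral>x. indicator ?A x \<partial>\<rho>l)"
    by (rule Bochner_Integration.integral_cong) (auto simp: UNIV_bool pi0_def reward_def)
  also have "\<dots> = measure \<rho>l ?A"
    using assms(3) by simp
  finally have reward: "(\<integral>x. (\<Sum>a\<in>UNIV. pi0 (fst x) a * reward \<Phi> (fst x) a (snd x)) \<partial>\<rho>l)
        = measure \<rho>l ?A" .
  have cost: "(\<integral>x. (\<Sum>a\<in>UNIV. pi0 (fst x) a * c (fst x) a) \<partial>\<rho>u) = 1"
    using assms(1,2) by (simp add: UNIV_bool pi0_def prob_space.prob_space)
  have "entropy \<rho> pi0 = 0"
    unfolding entropy_def by (simp add: UNIV_bool pi0_def)
  then show ?thesis
    unfolding lagrangian_def reward cost by (simp add: algebra_simps)
qed

lemma lagrangian_pi0_le_dual_fun: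
  assumes "prob_space \<rho>" and "prob_space \<rho>l" and "\<forall>z a. 0 \<le> c z a"
    and "\<forall>\<pi>\<in>Pol. is_policy \<pi>" and "pi0 \<in> Pol" and "0 \<le> lam" and "0 \<le> \<beta>"
  shows "lagrangian \<rho> \<rho>l \<rho>u \<Phi> c C \<beta> pi0 lam \<le> dual_fun \<rho> \<rho>l \<rho>u \<Phi> c C \<beta> Pol lam"
proof -
  have "bdd_above ((\<lambda>\<pi>. lagrangian \<rho> \<rho>l \<rho>u \<Phi> c C \<beta> \<pi> lam) ` Pol)"
    using lagrangian_le[OF assms(1-3) _ assms(6,7), of _ \<rho>u \<Phi> C] assms(4)
    by (intro bdd_aboveI2) auto
  then show ?thesis
    unfolding dual_fun_def using assms(5) by (rule cSUP_upper2) simp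
qed

lemma dual_variable_le:
  assumes "prob_space \<rho>" and "prob_space \<rho>l" and "prob_space \<rho>u"
    and "\<forall>z a. 0 \<le> c z a" and "\<forall>z. c z False = 1"
    and "\<forall>\<pi>\<in>Pol. is_policy \<pi>" and "pi0 \<in> Pol"
    and "{x \<in> space \<rho>l. \<Phi> False (fst x) = snd x} \<in> sets \<rho>l"
    and "0 \<le> \<beta>" and "0 < \<xi>" and "\<xi> \<le> C - 1" and "0 \<le> lam"
  shows "lam \<le> (dual_fun \<rho> \<rho>l \<rho>u \<Phi> c C \<beta> Pol lam
                 - measure \<rho>l {x \<in> space \<rho>l. \<Phi> False (fst x) = snd x}) / \<xi>"
proof -
  have "lam * \<xi> \<le> lam * (C - 1)"
    using assms(11,12) by (rule mult_left_mono)
  also have "\<dots> \<le> lam * (C - 1) + \<beta> / 2 * lam\<^sup>2"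
    using assms(9) by simp
  also have "\<dots> \<le> dual_fun \<rho> \<rho>l \<rho>u \<Phi> c C \<beta> Pol lam
                 - measure \<rho>l {x \<in> space \<rho>l. \<Phi> False (fst x) = snd x}"
    using lagrangian_pi0_le_dual_fun[OF assms(1,2,4,6,7,12,9), of \<rho>u \<Phi> C]
      lagrangian_pi0[where \<rho>l = \<rho>l and \<Phi> = \<Phi> and c = c, OF assms(3,5,8), of \<rho> C \<beta> lam]
    by simp
  finally show ?thesis
    using assms(10) by (simp add: pos_le_divide_eq)
qed

lemma optimal_duals_dual_fun_eq:
  assumes "lam \<in> optimal_duals \<rho> \<rho>l \<rho>u \<Phi> c C \<beta> Pol"
    and "\<mu> \<in> optimal_duals \<rho> \<rho>l \<rho>u \<Phi> c C \<beta> Pol"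
  shows "dual_fun \<rho> \<rho>l \<rho>u \<Phi> c C \<beta> Pol lam = dual_fun \<rho> \<rho>l \<rho>u \<Phi> c C \<beta> Pol \<mu>"
  using assms unfolding optimal_duals_def by (auto intro: order.antisym)

theorem lemmaA3:
  fixes \<rho> \<rho>l \<rho>u :: "('z \<times> bool) measure"
    and \<Phi> :: "bool \<Rightarrow> 'z \<Rightarrow> bool"
    and c :: "'z \<Rightarrow> bool \<Rightarrow> real"
    and C \<beta> \<xi> lamstar :: real
    and Pol :: "('z \<Rightarrow> bool \<Rightarrow> real) set"
  assumes "prob_space \<rho>" and "prob_space \<rho>l" and "prob_space \<rho>u"
    and "\<forall>z a. 0 \<le> c z a" and "\<forall>z. c z False = 1"
    and "\<forall>\<pi>\<in>Pol. is_policy \<pi>" and "pi0 \<in> Pol"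
    and "{x \<in> space \<rho>l. \<Phi> False (fst x) = snd x} \<in> sets \<rho>l"
    and "\<beta> > 0" and "C > 1" and "0 < \<xi>" and "\<xi> \<le> C - 1"
    and "lamstar \<in> optimal_duals \<rho> \<rho>l \<rho>u \<Phi> c C \<beta> Pol"
  shows "0 \<le> lamstar \<and>
         lamstar \<le> (dual_fun \<rho> \<rho>l \<rho>u \<Phi> c C \<beta> Pol lamstar
                 - measure \<rho>l {x \<in> space \<rho>l. \<Phi> False (fst x) = snd x}) / \<xi>
         \<and> bounded (optimal_duals \<rho> \<rho>l \<rho>u \<Phi> c C \<beta> Pol)"
proof -
  let ?D = "dual_fun \<rho> \<rho>l \<rho>u \<Phi> c C \<beta> Pol"
  let ?P = "measure \<rho>l {x \<in> space \<rho>l. \<Phi> False (fst x) = snd x}"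
  let ?bound = "(?D lamstar - ?P) / \<xi>"
  have le_bound: "lam \<le> (?D lam - ?P) / \<xi>"
    if "0 \<le> lam" for lam
    using assms(9)
    by (intro dual_variable_le[where \<rho>l = \<rho>l and \<Phi> = \<Phi>, OF assms(1-8) _ assms(11,12) that]) simp
  have "optimal_duals \<rho> \<rho>l \<rho>u \<Phi> c C \<beta> Pol \<subseteq> {0 .. ?bound}"
  proof
    fix lam assume opt: "lam \<in> optimal_duals \<rho> \<rho>l \<rho>u \<Phi> c C \<beta> Pol"
    then have "0 \<le> lam"
      unfolding optimal_duals_def by simp
    then show "lam \<in> {0 .. ?bound}"
      using le_bound[of lam] optimal_duals_dual_fun_eq[OF opt assms(13)] by simp
  qed
  then have "bounded (optimal_duals \<rho> \<rho>l \<rho>u \<Phi> c C \<beta> Pol)"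
    by (rule bounded_subset[OF bounded_closed_interval])
  moreover have "0 \<le> lamstar"
    using assms(13) unfolding optimal_duals_def by simp
  ultimately show ?thesis
    using le_bound by simp
qed

end
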